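(* Let $\{\mathbf{x}^k,\mathbf{y}^k,\mathbf{z}^k,\boldsymbol{\lambda}^k,\theta^{(k)},\beta^{(k)}\}$ be generated by the Fast PALM algorithm. Then for every $k\ge0$ and every $\mathbf{x}$, $$\frac{1-\theta^{(k+1)}}{(\theta^{(k+1)})^2}\bigl(f(\mathbf{x}^{k+1})-f(\mathbf{x})\bigr)-\frac{1}{\theta^{(k)}}\bigl\langle\mathcal{A}^T(\boldsymbol{\lambda}^{k+1}),\mathbf{x}-\mathbf{z}^{k+1}\bigr\rangle\le\frac{1-\theta^{(k)}}{(\theta^{(k)})^2}\bigl(f(\mathbf{x}^k)-f(\mathbf{x})\bigr)+\frac{L}{2}\bigl(\|\mathbf{z}^k-\mathbf{x}\|^2-\|\mathbf{z}^{k+1}-\mathbf{x}\|^2\bigr).$$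
   Context: Setting: finite-dimensional real inner product spaces with induced norms $\|\cdot\|$. Problem: $\min_{\mathbf{x}} f(\mathbf{x})=g(\mathbf{x})+h(\mathbf{x})$ subject to $\mathcal{A}(\mathbf{x})=\mathbf{b}$, where $g,h$ are proper convex lower semicontinuous, $g$ is differentiable with $\|\nabla g(\mathbf{x})-\nabla g(\mathbf{y})\|\le L\|\mathbf{x}-\mathbf{y}\|$ for all $\mathbf{x},\mathbf{y}$ ($L>0$), $\mathcal{A}$ is linear with adjoint $\mathcal{A}^T$. Fast PALM: given $\mathbf{x}^0,\mathbf{z}^0,\boldsymbol{\lambda}^0$ and $\theta^{(0)}=\beta^{(0)}=1$, for $k=0,1,2,\dots$: $\mathbf{y}^{k+1}=(1-\theta^{(k)})\mathbf{x}^k+\theta^{(k)}\mathbf{z}^k$; $\mathbf{z}^{k+1}=\arg\min_{\mathbf{x}}\ \langle\nabla g(\mathbf{y}^{k+1}),\mathbf{x}\rangle+h(\mathbf{x})+\langle\boldsymbol{\lambda}^k,\mathcal{A}(\mathbf{x})\rangle+\frac{\beta^{(k)}}{2}\|\mathcal{A}(\mathbf{x})-\mathbf{b}\|^2+\frac{L\theta^{(k)}}{2}\|\mathbf{x}-\mathbf{z}^k\|^2$; $\mathbf{x}^{k+1}=(1-\theta^{(k)})\mathbf{x}^k+\theta^{(k)}\mathbf{z}^{k+1}$; $\boldsymbol{\lambda}^{k+1}=\boldsymbol{\lambda}^k+\beta^{(k)}(\mathcal{A}(\mathbf{z}^{k+1})-\mathbf{b})$; $\theta^{(k+1)}=\frac{-(\theta^{(k)})^2+\sqrt{(\theta^{(k)})^4+4(\theta^{(k)})^2}}{2}$;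 $\beta^{(k+1)}=1/\theta^{(k+1)}$. *)

theory Defs
  imports "HOL-Analysis.Analysis"
begin

definition proper_fun :: "('a \<Rightarrow> ereal) \<Rightarrow> bool" where
  "proper_fun h \<longleftrightarrow> (\<forall>x. h x \<noteq> -\<infinity>) \<and> (\<exists>x. h x \<noteq> \<infinity>)"

definition ext_convex :: "('a::real_vector \<Rightarrow> ereal) \<Rightarrow> bool" where
  "ext_convex h \<longleftrightarrow> (\<forall>x y t. 0 \<le> t \<and> t \<le> 1 \<longrightarrow>
      h ((1 - t) *\<^sub>R x + t *\<^sub>R y) \<le> ereal (1 - t) * h x + ereal t * h y)"

definition lsc_fun :: "('a::topological_space \<Rightarrow> ereal) \<Rightarrow> bool" where
  "lsc_fun h \<longleftrightarrow> (\<forall>c. closed {x. h x \<le> c})"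

end

theory Submission
  imports Defs
begin

text \<open>
Write G for the gradient of g at y(k+1). The descent lemma at y(k+1) together with the gradient
inequality of the convex g at x(k) and at x bounds g(x(k+1)) by (1 - \<theta> k) g(x(k)) + \<theta> k g(x)
plus \<theta> k G\<bullet>(z(k+1) - x) + L (\<theta> k)^2/2 norm(z(k+1) - z(k))^2; convexity of h gives the same
convex combination for h(x(k+1)). Minimality of z(k+1), tested along the segment towards x,
yields a variational inequality in which the G-terms cancel and the multiplier update produces
the adjoint of A applied to \<lambda>(k+1), and the three-point identity turns the remaining proximal
term into the difference of squared distances. After division by (\<theta> k)^2 the step-size
recurrence gives (1 - \<theta>(k+1))/\<theta>(k+1)^2 = 1/(\<theta> k)^2.
\<close>

lemma has_real_derivative_along_line:
  fixes g :: "'a::real_inner \<Rightarrow> real"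
  assumes "\<And>u. (g has_derivative (\<lambda>v. G u \<bullet> v)) (at u)"
  shows "((\<lambda>t. g (y + t *\<^sub>R d)) has_real_derivative (G (y + t *\<^sub>R d) \<bullet> d)) (at t)"
proof -
  have "((\<lambda>t. y + t *\<^sub>R d) has_derivative (\<lambda>s. s *\<^sub>R d)) (at t)"
    by (auto intro!: derivative_eq_intros)
  from has_derivative_compose[OF this assms]
  have "((\<lambda>t. g (y + t *\<^sub>R d)) has_derivative (\<lambda>s. G (y + t *\<^sub>R d) \<bullet> (s *\<^sub>R d))) (at t)" .
  moreover have "(\<lambda>s. G (y + t *\<^sub>R d) \<bullet> (s *\<^sub>R d)) = (*) (G (y + t *\<^sub>R d) \<bullet> d)"
    by (rule ext) (simp add: mult.commute)
  ultimately show ?thesis unfolding has_field_derivative_def by simp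
qed

lemma convex_on_gradient_inequality:
  fixes g :: "'a::real_inner \<Rightarrow> real"
  assumes cvx: "convex_on UNIV g"
    and der: "\<And>u. (g has_derivative (\<lambda>v. G u \<bullet> v)) (at u)"
  shows "g y + G y \<bullet> (v - y) \<le> g v"
proof -
  define d where "d = v - y"
  let ?p = "\<lambda>t. g (y + t *\<^sub>R d)"
  have "convex_on UNIV ?p"
  proof (rule convex_onI)
    fix t s1 s2 :: real assume "0 < t" "t < 1"
    have "y + ((1 - t) * s1 + t * s2) *\<^sub>R d = (1 - t) *\<^sub>R (y + s1 *\<^sub>R d) + t *\<^sub>R (y + s2 *\<^sub>R d)"
      by (simp add: algebra_simps)
    then show "?p ((1 - t) *\<^sub>R s1 + t *\<^sub>R s2) \<le> (1 - t) * ?p s1 + t * ?p s2"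
      using convex_onD[OF cvx, of t "y + s1 *\<^sub>R d" "y + s2 *\<^sub>R d"] \<open>0 < t\<close> \<open>t < 1\<close> by simp
  qed simp
  from convex_on_imp_above_tangent[OF this, of 0 1] has_real_derivative_along_line[OF der, of y d 0]
  have "G y \<bullet> d \<le> ?p 1 - ?p 0" by simp
  then show ?thesis by (simp add: d_def)
qed

lemma lipschitz_gradient_upper_bound:
  fixes g :: "'a::real_inner \<Rightarrow> real"
  assumes der: "\<And>u. (g has_derivative (\<lambda>v. G u \<bullet> v)) (at u)"
    and lip: "\<And>u v. norm (G u - G v) \<le> L * norm (u - v)"
  shows "g v \<le> g y + G y \<bullet> (v - y) + L / 2 * (norm (v - y))\<^sup>2"
proof -
  define d where "d = v - y"
  define \<phi> where "\<phi> t = g (y + t *\<^sub>R d) - t * (G y \<bullet> d) - L / 2 * t\<^sup>2 * (norm d)\<^sup>2" for t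
  have "\<phi> 1 \<le> \<phi> 0"
  proof (rule DERIV_nonpos_imp_nonincreasing[of 0 1 \<phi>])
    fix t :: real assume t: "0 \<le> t" "t \<le> 1"
    have D: "(\<phi> has_real_derivative (G (y + t *\<^sub>R d) \<bullet> d - G y \<bullet> d - L * t * (norm d)\<^sup>2)) (at t)"
      unfolding \<phi>_def
      by (rule derivative_eq_intros has_real_derivative_along_line[OF der] refl | simp)+
    have "G (y + t *\<^sub>R d) \<bullet> d - G y \<bullet> d = (G (y + t *\<^sub>R d) - G y) \<bullet> d"
      by (simp add: inner_diff_left)
    also have "\<dots> \<le> norm (G (y + t *\<^sub>R d) - G y) * norm d"
      by (rule norm_cauchy_schwarz)
    also have "\<dots> \<le> L * norm (t *\<^sub>R d) * norm d"
      using lip[of "y + t *\<^sub>R d" y] by (simp add: mult_right_mono)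
    also have "\<dots> = L * t * (norm d)\<^sup>2" using t by (simp add: power2_eq_square)
    finally show "\<exists>y. (\<phi> has_real_derivative y) (at t) \<and> y \<le> 0" using D by force
  qed simp
  then show ?thesis by (simp add: \<phi>_def d_def)
qed

lemma le_if_le_add_scaled:
  fixes a b C :: real
  assumes "\<And>t. 0 < t \<Longrightarrow> t \<le> 1 \<Longrightarrow> a \<le> b + t * C"
  shows "a \<le> b"
proof (rule field_le_epsilon)
  fix e :: real assume "0 < e"
  define t where "t = min 1 (e / (\<bar>C\<bar> + 1))"
  have t: "0 < t" "t \<le> 1" using \<open>0 < e\<close> by (auto simp: t_def)
  have "t * C \<le> t * (\<bar>C\<bar> + 1)"
    using t by (intro mult_left_mono) auto
  also have "\<dots> \<le> e / (\<bar>C\<bar> + 1) * (\<bar>C\<bar> + 1)"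
    by (intro mult_right_mono) (auto simp: t_def)
  finally have "t * C \<le> e" by simp
  then show "a \<le> b + e" using assms[OF t] by simp
qed

lemma power2_norm_add_scaleR:
  fixes a d :: "'a::real_inner"
  shows "(norm (a + t *\<^sub>R d))\<^sup>2 = (norm a)\<^sup>2 + 2 * t * (a \<bullet> d) + t\<^sup>2 * (norm d)\<^sup>2"
  unfolding power2_norm_eq_inner
  by (simp add: inner_add_left inner_add_right inner_commute algebra_simps power2_eq_square)

lemma three_point_identity:
  fixes a b c :: "'a::real_inner"
  shows "(norm (c - a))\<^sup>2 - (norm (b - a))\<^sup>2 = (norm (b - c))\<^sup>2 + 2 * ((b - c) \<bullet> (a - b))"
  unfolding power2_norm_eq_inner
  by (simp add: inner_diff_left inner_diff_right inner_commute algebra_simps)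

lemma ext_convex_minimizer_slope_le:
  fixes h :: "'a::real_vector \<Rightarrow> ereal" and q :: "'a \<Rightarrow> real"
  assumes cvx: "ext_convex h"
    and min: "\<And>u. ereal (q z) + h z \<le> ereal (q u) + h u"
    and expand: "\<And>t. q (z + t *\<^sub>R (w - z)) = q z + t * D + t\<^sup>2 * C"
    and hz: "h z = ereal hz" and hw: "h w = ereal hw"
  shows "hz - hw \<le> D"
proof (rule le_if_le_add_scaled)
  fix t :: real assume t: "0 < t" "t \<le> 1"
  let ?u = "z + t *\<^sub>R (w - z)"
  have "?u = (1 - t) *\<^sub>R z + t *\<^sub>R w" by (simp add: algebra_simps)
  then have "h ?u \<le> ereal (1 - t) * h z + ereal t * h w"
    using cvx t unfolding ext_convex_def by simp
  then have h_u: "h ?u \<le> ereal ((1 - t) * hz + t * hw)" by (simp add: hz hw)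
  have "ereal (q z + hz) \<le> ereal (q ?u) + h ?u"
    using min[of ?u] by (simp add: hz)
  also have "\<dots> \<le> ereal (q ?u + ((1 - t) * hz + t * hw))"
    using add_left_mono[OF h_u, of "ereal (q ?u)"] by simp
  finally have "t * (hz - hw) \<le> t * (D + t * C)"
    unfolding expand by (simp add: algebra_simps power2_eq_square)
  then show "hz - hw \<le> D + t * C" using t by simp
qed

definition palm_quadratic ::
    "'a::real_inner \<Rightarrow> 'b::real_inner \<Rightarrow> real \<Rightarrow> real \<Rightarrow> ('a \<Rightarrow> 'b) \<Rightarrow> 'b \<Rightarrow> 'a \<Rightarrow> 'a \<Rightarrow> real" where
  "palm_quadratic G lam \<beta> c A b z u =
     G \<bullet> u + lam \<bullet> A u + \<beta> / 2 * (norm (A u - b))\<^sup>2 + c / 2 * (norm (u - z))\<^sup>2"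

lemma palm_quadratic_along_line:
  fixes A :: "'a::euclidean_space \<Rightarrow> 'b::euclidean_space"
  assumes lin: "linear A"
  shows "palm_quadratic G lam \<beta> c A b z (z' + t *\<^sub>R d) = palm_quadratic G lam \<beta> c A b z z'
           + t * ((G + adjoint A (lam + \<beta> *\<^sub>R (A z' - b))) \<bullet> d + c * ((z' - z) \<bullet> d))
           + t\<^sup>2 * (\<beta> / 2 * (norm (A d))\<^sup>2 + c / 2 * (norm d)\<^sup>2)"
proof -
  have Az: "A (z' + t *\<^sub>R d) = A z' + t *\<^sub>R A d"
    using lin by (simp add: linear_add linear_scale)
  have "A (z' + t *\<^sub>R d) - b = (A z' - b) + t *\<^sub>R A d" and "z' + t *\<^sub>R d - z = (z' - z) + t *\<^sub>R d"
    by (simp_all add: Az)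
  then have N1: "(norm (A (z' + t *\<^sub>R d) - b))\<^sup>2
               = (norm (A z' - b))\<^sup>2 + 2 * t * ((A z' - b) \<bullet> A d) + t\<^sup>2 * (norm (A d))\<^sup>2"
    and N2: "(norm (z' + t *\<^sub>R d - z))\<^sup>2 = (norm (z' - z))\<^sup>2 + 2 * t * ((z' - z) \<bullet> d) + t\<^sup>2 * (norm d)\<^sup>2"
    by (simp_all only: power2_norm_add_scaleR)
  have adj: "adjoint A (lam + \<beta> *\<^sub>R (A z' - b)) \<bullet> d = lam \<bullet> A d + \<beta> * ((A z' - b) \<bullet> A d)"
    using adjoint_works[OF lin, of d] by (simp add: inner_commute inner_add_right)
  show ?thesis
    unfolding palm_quadratic_def N1 N2 inner_add_left[of G] adj
    unfolding Az by (simp add: inner_add_left inner_add_right algebra_simps power2_eq_square)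
qed

lemma accelerated_step_size_next:
  fixes a b :: real
  assumes a: "a \<noteq> 0" and b: "b = (- a\<^sup>2 + sqrt (a ^ 4 + 4 * a\<^sup>2)) / 2"
  shows "0 < b" and "b < 1" and "b\<^sup>2 = a\<^sup>2 * (1 - b)"
proof -
  define s where "s = sqrt (a ^ 4 + 4 * a\<^sup>2)"
  have s2: "s\<^sup>2 = a ^ 4 + 4 * a\<^sup>2" unfolding s_def by simp
  have "0 < a\<^sup>2" using a by simp
  with s2 have "(a\<^sup>2)\<^sup>2 < s\<^sup>2" by (simp add: power4_eq_xxxx power2_eq_square)
  then have "a\<^sup>2 < s" using power_less_imp_less_base[of "a\<^sup>2" 2 s] by (simp add: s_def)
  then show "0 < b" using b by (simp add: s_def)
  have bs: "b = (s - a\<^sup>2) / 2" using b by (simp add: s_def)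
  show "b\<^sup>2 = a\<^sup>2 * (1 - b)" unfolding bs using s2
    by (simp add: power2_eq_square power4_eq_xxxx field_simps)
  moreover have "0 < b\<^sup>2" using \<open>0 < b\<close> by simp
  ultimately have "0 < a\<^sup>2 * (1 - b)" by simp
  then show "b < 1" by (simp add: zero_less_mult_iff)
qed

locale fast_palm =
  fixes g :: "'a::euclidean_space \<Rightarrow> real" and gradg :: "'a \<Rightarrow> 'a" and h :: "'a \<Rightarrow> ereal"
    and A :: "'a \<Rightarrow> 'b::euclidean_space" and b :: 'b and L :: real
    and x y z :: "nat \<Rightarrow> 'a" and lam :: "nat \<Rightarrow> 'b" and \<theta> \<beta> :: "nat \<Rightarrow> real"
    and f :: "'a \<Rightarrow> ereal"
  assumes g_convex: "convex_on UNIV g"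
    and g_grad: "\<And>u. (g has_derivative (\<lambda>v. gradg u \<bullet> v)) (at u)"
    and g_lip: "\<And>u v. norm (gradg u - gradg v) \<le> L * norm (u - v)"
    and h_proper: "proper_fun h"
    and h_convex: "ext_convex h"
    and f_def: "\<And>u. f u = ereal (g u) + h u"
    and A_linear: "linear A"
    and \<theta>0: "\<theta> 0 = 1"
    and y_step: "\<And>k. y (Suc k) = (1 - \<theta> k) *\<^sub>R x k + \<theta> k *\<^sub>R z k"
    and z_step: "\<And>k. is_arg_min
        (\<lambda>u. ereal (palm_quadratic (gradg (y (Suc k))) (lam k) (\<beta> k) (L * \<theta> k) A b (z k) u) + h u)
        (\<lambda>_. True) (z (Suc k))"
    and x_step: "\<And>k. x (Suc k) = (1 - \<theta> k) *\<^sub>R x k + \<theta> k *\<^sub>R z (Suc k)"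
    and lam_step: "\<And>k. lam (Suc k) = lam k + \<beta> k *\<^sub>R (A (z (Suc k)) - b)"
    and \<theta>_step: "\<And>k. \<theta> (Suc k) = (- (\<theta> k)\<^sup>2 + sqrt ((\<theta> k) ^ 4 + 4 * (\<theta> k)\<^sup>2)) / 2"
begin

lemma theta_pos: "0 < \<theta> n"
  by (induction n) (simp_all add: \<theta>0 accelerated_step_size_next(1)[OF _ \<theta>_step])

lemma theta_Suc_lt_one: "\<theta> (Suc n) < 1"
  using accelerated_step_size_next(2)[OF _ \<theta>_step] theta_pos[of n] by simp

lemma theta_le_one: "\<theta> n \<le> 1"
  using theta_Suc_lt_one by (cases n) (simp_all add: \<theta>0 less_imp_le)

lemma power2_theta_Suc: "(\<theta> (Suc n))\<^sup>2 = (\<theta> n)\<^sup>2 * (1 - \<theta> (Suc n))"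
  using accelerated_step_size_next(3)[OF _ \<theta>_step] theta_pos[of n] by simp

lemma weight_Suc_eq: "(1 - \<theta> (Suc n)) / (\<theta> (Suc n))\<^sup>2 = 1 / (\<theta> n)\<^sup>2"
  using theta_Suc_lt_one[of n] by (simp add: power2_theta_Suc)

lemma h_not_minf: "h u \<noteq> -\<infinity>"
  using h_proper by (simp add: proper_fun_def)

lemma h_convex_combination:
  "0 \<le> t \<Longrightarrow> t \<le> 1 \<Longrightarrow> h ((1 - t) *\<^sub>R u + t *\<^sub>R v) \<le> ereal (1 - t) * h u + ereal t * h v"
  using h_convex unfolding ext_convex_def by blast

lemma z_Suc_minimizes:
  "ereal (palm_quadratic (gradg (y (Suc n))) (lam n) (\<beta> n) (L * \<theta> n) A b (z n) (z (Suc n))) + h (z (Suc n))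
     \<le> ereal (palm_quadratic (gradg (y (Suc n))) (lam n) (\<beta> n) (L * \<theta> n) A b (z n) u) + h u"
  using z_step[of n] unfolding is_arg_min_def by (auto simp: not_less)

lemma h_z_Suc_finite: "h (z (Suc n)) \<noteq> \<infinity>"
proof
  assume "h (z (Suc n)) = \<infinity>"
  obtain u where "h u \<noteq> \<infinity>" using h_proper by (auto simp: proper_fun_def)
  with h_not_minf[of u] z_Suc_minimizes[of n u] \<open>h (z (Suc n)) = \<infinity>\<close> show False
    by (cases "h u") auto
qed

lemma h_x_Suc_finite: "h (x (Suc n)) \<noteq> \<infinity>"
proof (induction n)
  case 0
  show ?case using x_step[of 0] h_z_Suc_finite[of 0] by (simp add: \<theta>0)
next
  case (Suc n)
  have "h (x (Suc (Suc n))) \<le> ereal (1 - \<theta> (Suc n)) * h (x (Suc n)) + ereal (\<theta> (Suc n)) * h (z (Suc (Suc n)))"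
    unfolding x_step[of "Suc n"] using theta_pos theta_le_one by (intro h_convex_combination) (auto simp: less_imp_le)
  with Suc h_z_Suc_finite h_not_minf show ?case
    by (cases "h (x (Suc n))"; cases "h (z (Suc (Suc n)))") auto
qed

lemma g_x_Suc_le:
  "g (x (Suc k)) \<le> (1 - \<theta> k) * g (x k) + \<theta> k * g w
     + \<theta> k * (gradg (y (Suc k)) \<bullet> (z (Suc k) - w)) + L / 2 * (\<theta> k)\<^sup>2 * (norm (z (Suc k) - z k))\<^sup>2"
proof -
  define G where "G = gradg (y (Suc k))"
  have x_minus_y: "x (Suc k) - y (Suc k) = (1 - \<theta> k) *\<^sub>R (x k - y (Suc k)) + \<theta> k *\<^sub>R (w - y (Suc k))
                     + \<theta> k *\<^sub>R (z (Suc k) - w)"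
    "x (Suc k) - y (Suc k) = \<theta> k *\<^sub>R (z (Suc k) - z k)"
    unfolding x_step[of k] y_step[of k] by (simp_all add: algebra_simps)
  have "g (x (Suc k)) \<le> g (y (Suc k)) + G \<bullet> (x (Suc k) - y (Suc k)) + L / 2 * (norm (x (Suc k) - y (Suc k)))\<^sup>2"
    unfolding G_def by (rule lipschitz_gradient_upper_bound[OF g_grad g_lip])
  also have "\<dots> = (1 - \<theta> k) * (g (y (Suc k)) + G \<bullet> (x k - y (Suc k))) + \<theta> k * (g (y (Suc k)) + G \<bullet> (w - y (Suc k)))
      + \<theta> k * (G \<bullet> (z (Suc k) - w)) + L / 2 * (\<theta> k)\<^sup>2 * (norm (z (Suc k) - z k))\<^sup>2"
  proof -
    have "G \<bullet> (x (Suc k) - y (Suc k)) = (1 - \<theta> k) * (G \<bullet> (x k - y (Suc k))) + \<theta> k * (G \<bullet> (w - y (Suc k)))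
            + \<theta> k * (G \<bullet> (z (Suc k) - w))"
      unfolding x_minus_y(1) by (simp add: inner_add_right)
    moreover have "(norm (x (Suc k) - y (Suc k)))\<^sup>2 = (\<theta> k)\<^sup>2 * (norm (z (Suc k) - z k))\<^sup>2"
      unfolding x_minus_y(2) by (simp add: power_mult_distrib)
    ultimately show ?thesis by (simp add: algebra_simps)
  qed
  also have "\<dots> \<le> (1 - \<theta> k) * g (x k) + \<theta> k * g w
      + \<theta> k * (G \<bullet> (z (Suc k) - w)) + L / 2 * (\<theta> k)\<^sup>2 * (norm (z (Suc k) - z k))\<^sup>2"
    using theta_pos[of k] theta_le_one[of k] unfolding G_def
    by (intro add_mono mult_left_mono convex_on_gradient_inequality[OF g_convex g_grad] order_refl) auto
  finally show ?thesis unfolding G_def .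
qed

lemma subproblem_optimality:
  assumes hz: "h (z (Suc k)) = ereal hz" and hw: "h w = ereal hw"
  shows "hz - hw \<le> gradg (y (Suc k)) \<bullet> (w - z (Suc k)) + adjoint A (lam (Suc k)) \<bullet> (w - z (Suc k))
                    + L * \<theta> k * ((z (Suc k) - z k) \<bullet> (w - z (Suc k)))"
  using ext_convex_minimizer_slope_le[OF h_convex z_Suc_minimizes palm_quadratic_along_line[OF A_linear] hz hw]
  by (simp add: lam_step inner_add_left)

lemma one_step_inequality_real:
  assumes hw: "h w = ereal hw" and hz: "h (z (Suc k)) = ereal hz"
    and h_comb: "hx' \<le> (1 - \<theta> k) * hxk + \<theta> k * hz"
  shows "1 / (\<theta> k)\<^sup>2 * (g (x (Suc k)) + hx' - (g w + hw))
           - 1 / \<theta> k * (adjoint A (lam (Suc k)) \<bullet> (w - z (Suc k)))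
         \<le> (1 - \<theta> k) / (\<theta> k)\<^sup>2 * (g (x k) + hxk - (g w + hw))
           + L / 2 * ((norm (z k - w))\<^sup>2 - (norm (z (Suc k) - w))\<^sup>2)"
proof -
  let ?t = "\<theta> k" and ?G = "gradg (y (Suc k))" and ?d = "z (Suc k) - z k"
    and ?Q = "adjoint A (lam (Suc k)) \<bullet> (w - z (Suc k))"
    and ?E = "g (x k) + hxk - (g w + hw)"
    and ?D = "L / 2 * ((norm (z k - w))\<^sup>2 - (norm (z (Suc k) - w))\<^sup>2)"
  have t: "0 < ?t" "?t \<le> 1" using theta_pos theta_le_one .
  have "g (x (Suc k)) + hx' - (g w + hw)
          \<le> (1 - ?t) * ?E + ?t * (hz - hw) + ?t * (?G \<bullet> (z (Suc k) - w)) + L / 2 * ?t\<^sup>2 * (norm ?d)\<^sup>2"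
    using g_x_Suc_le[of k w] h_comb by (simp add: algebra_simps)
  also have "\<dots> \<le> (1 - ?t) * ?E + ?t * (?G \<bullet> (w - z (Suc k)) + ?Q + L * ?t * (?d \<bullet> (w - z (Suc k))))
                   + ?t * (?G \<bullet> (z (Suc k) - w)) + L / 2 * ?t\<^sup>2 * (norm ?d)\<^sup>2"
    using subproblem_optimality[OF hz hw] t by (intro add_mono mult_left_mono order_refl) auto
  also have "\<dots> = (1 - ?t) * ?E + ?t * ?Q + ?t\<^sup>2 * ?D"
    unfolding three_point_identity[of "z k" w "z (Suc k)"]
    by (simp add: inner_diff_right algebra_simps power2_eq_square)
  finally have "1 / ?t\<^sup>2 * (g (x (Suc k)) + hx' - (g w + hw)) \<le> 1 / ?t\<^sup>2 * ((1 - ?t) * ?E + ?t * ?Q + ?t\<^sup>2 * ?D)"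
    by (intro mult_left_mono) auto
  also have "\<dots> = (1 - ?t) / ?t\<^sup>2 * ?E + 1 / ?t * ?Q + ?D"
    using t by (simp add: field_simps power2_eq_square)
  finally show ?thesis by simp
qed

lemma one_step_inequality:
  "ereal ((1 - \<theta> (Suc k)) / (\<theta> (Suc k))\<^sup>2) * (f (x (Suc k)) - f w)
           - ereal (1 / \<theta> k * (adjoint A (lam (Suc k)) \<bullet> (w - z (Suc k))))
         \<le> ereal ((1 - \<theta> k) / (\<theta> k)\<^sup>2) * (f (x k) - f w)
           + ereal (L / 2 * ((norm (z k - w))\<^sup>2 - (norm (z (Suc k) - w))\<^sup>2))"
proof (cases "h w")
  case PInf
  have "0 < 1 / (\<theta> k)\<^sup>2" using theta_pos[of k] by simp
  moreover have "f (x (Suc k)) - f w = -\<infinity>"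
    using PInf h_x_Suc_finite[of k] h_not_minf[of "x (Suc k)"] by (cases "h (x (Suc k))") (auto simp: f_def)
  ultimately show ?thesis by (simp add: weight_Suc_eq)
next
  case MInf
  then show ?thesis using h_not_minf by simp
next
  case (real hw)
  obtain hx' hz where hx: "h (x (Suc k)) = ereal hx'" and hz: "h (z (Suc k)) = ereal hz"
    using h_x_Suc_finite[of k] h_z_Suc_finite[of k] h_not_minf by (meson ereal_cases)
  \<comment> \<open>For \<open>k = 0\<close> the value \<open>h (x 0)\<close> may be infinite, but its weight \<open>1 - \<theta> 0\<close> vanishes.\<close>
  obtain hxk where h_comb: "hx' \<le> (1 - \<theta> k) * hxk + \<theta> k * hz"
    and rhs: "ereal ((1 - \<theta> k) / (\<theta> k)\<^sup>2) * (f (x k) - f w)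
                = ereal ((1 - \<theta> k) / (\<theta> k)\<^sup>2 * (g (x k) + hxk - (g w + hw)))"
  proof (cases k)
    case 0
    have "x (Suc 0) = z (Suc 0)" using x_step[of 0] by (simp add: \<theta>0)
    with hx hz have "hx' \<le> (1 - \<theta> k) * 0 + \<theta> k * hz" by (simp add: 0 \<theta>0)
    then show ?thesis using that by (simp add: 0 \<theta>0 zero_ereal_def[symmetric])
  next
    case (Suc m)
    obtain hxk where hxk: "h (x k) = ereal hxk"
      using h_x_Suc_finite[of m] h_not_minf Suc by (meson ereal_cases)
    have "h (x (Suc k)) \<le> ereal (1 - \<theta> k) * h (x k) + ereal (\<theta> k) * h (z (Suc k))"
      unfolding x_step[of k] using theta_pos[of k] theta_le_one[of k]
      by (intro h_convex_combination) auto
    then have "hx' \<le> (1 - \<theta> k) * hxk + \<theta> k * hz" using hx hz hxk by simp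
    then show ?thesis using that by (simp add: f_def hxk real)
  qed
  show ?thesis
    using one_step_inequality_real[OF real hz h_comb]
    unfolding weight_Suc_eq rhs by (simp add: f_def hx real)
qed

end

theorem proposition1:
  fixes g :: "'a::euclidean_space \<Rightarrow> real"
    and gradg :: "'a \<Rightarrow> 'a"
    and h :: "'a \<Rightarrow> ereal"
    and A :: "'a \<Rightarrow> 'b::euclidean_space"
    and b :: 'b
    and L :: real
    and x y z :: "nat \<Rightarrow> 'a"
    and lam :: "nat \<Rightarrow> 'b"
    and \<theta> \<beta> :: "nat \<Rightarrow> real"
    and f :: "'a \<Rightarrow> ereal"
  assumes g_convex: "convex_on UNIV g"
    and g_grad: "\<And>u. (g has_derivative (\<lambda>v. gradg u \<bullet> v)) (at u)"
    and L_pos: "L > 0"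
    and g_lip: "\<And>u v. norm (gradg u - gradg v) \<le> L * norm (u - v)"
    and h_proper: "proper_fun h"
    and h_convex: "ext_convex h"
    and h_lsc: "lsc_fun h"
    and f_def: "\<And>u. f u = ereal (g u) + h u"
    and A_linear: "linear A"
    and \<theta>0: "\<theta> 0 = 1"
    and \<beta>0: "\<beta> 0 = 1"
    and y_step: "\<And>k. y (Suc k) = (1 - \<theta> k) *\<^sub>R x k + \<theta> k *\<^sub>R z k"
    and z_step: "\<And>k. is_arg_min
        (\<lambda>u. ereal (gradg (y (Suc k)) \<bullet> u + lam k \<bullet> A u
                + \<beta> k / 2 * (norm (A u - b))\<^sup>2
                + L * \<theta> k / 2 * (norm (u - z k))\<^sup>2) + h u)
        (\<lambda>_. True) (z (Suc k))"
    and x_step: "\<And>k. x (Suc k) = (1 - \<theta> k) *\<^sub>R x k + \<theta> k *\<^sub>R z (Suc k)"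
    and lam_step: "\<And>k. lam (Suc k) = lam k + \<beta> k *\<^sub>R (A (z (Suc k)) - b)"
    and \<theta>_step: "\<And>k. \<theta> (Suc k) = (- (\<theta> k)\<^sup>2 + sqrt ((\<theta> k) ^ 4 + 4 * (\<theta> k)\<^sup>2)) / 2"
    and \<beta>_step: "\<And>k. \<beta> (Suc k) = 1 / \<theta> (Suc k)"
  shows "ereal ((1 - \<theta> (Suc k)) / (\<theta> (Suc k))\<^sup>2) * (f (x (Suc k)) - f w)
           - ereal (1 / \<theta> k * (adjoint A (lam (Suc k)) \<bullet> (w - z (Suc k))))
         \<le> ereal ((1 - \<theta> k) / (\<theta> k)\<^sup>2) * (f (x k) - f w)
           + ereal (L / 2 * ((norm (z k - w))\<^sup>2 - (norm (z (Suc k) - w))\<^sup>2))"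
proof -
  interpret fast_palm g gradg h A b L x y z lam \<theta> \<beta> f
    using g_convex g_grad g_lip h_proper h_convex f_def A_linear \<theta>0
      y_step z_step x_step lam_step \<theta>_step
    by (intro fast_palm.intro) (simp_all add: palm_quadratic_def)
  show ?thesis by (rule one_step_inequality)
qed

end
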